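(* For $Q$ symmetric positive definite, as $\|\gamma\|\to\infty$ ($\gamma\in\mathbb{R}^{k_2}$), $f_{\infty,\gamma}(t)\to f_{\infty,\infty}(t)$ for every $t\in\mathbb{R}^k$, hence also $\int|f_{\infty,\gamma}-f_{\infty,\infty}|\to0$, and the corresponding cdfs converge in total variation to the cdf of $N(0,\sigma^2Q^{-1})$.
   Context: $k=k_1+k_2$, $k_1,k_2\ge1$, $\sigma>0$, $\alpha>0$, $Q$ a symmetric positive definite $k\times k$ matrix partitioned into blocks $Q_{11}$ ($k_1\times k_1$), $Q_{12}$, $Q_{21}$, $Q_{22}$ ($k_2\times k_2$). $f_{\infty,\infty}$ is the $N(0,\sigma^2Q^{-1})$ density. For $t=(t_1',t_2')'$, with $D_{\infty2}=(Q_{22}-Q_{21}Q_{11}^{-1}Q_{12})^{-1/2}$, $w=D_{\infty2}^{-1}(t_2+\gamma)$, $G=g(\|w\|)$: $f_{\infty,\gamma}(t)=(2\pi\sigma^2)^{-k/2}[\det Q]^{1/2}\exp(-\tfrac1{2\sigma^2}\|Q_{11}^{1/2}t_1+Q_{11}^{-1/2}Q_{12}t_2\|^2)[1+\exp(-\alpha\sigma^{-2}G^2+2\alpha k_2)]^{k_2}\{1+2\alpha\sigma^{-2}G^2[1+\exp(\alpha\sigma^{-2}G^2-2\alpha k_2)]^{-1}\}^{-1}\exp(-\tfrac1{2\sigma^2}\|G\,w/\|w\|-D_{\infty2}^{-1}\gamma\|^2)$ (with $Gw/\|w\|=0$ if $w=0$). Here $A^{1/2}$ is the symmetric positive definite root,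 and $g$ is the inverse of the bijection $h:[0,\infty)\to[0,\infty)$, $h(\xi)=[1+a\exp(-\xi^2/b)]^{-1}\xi$ with $a=\exp(2\alpha k_2)$, $b=\sigma^2/\alpha$. *)

theory Defs
  imports "HOL-Analysis.Analysis"
begin

definition pos_def_mat :: "real^'n^'n \<Rightarrow> bool" where
  "pos_def_mat A \<longleftrightarrow> transpose A = A \<and> (\<forall>x. x \<noteq> 0 \<longrightarrow> x \<bullet> (A *v x) > 0)"

definition mat_sqrt :: "real^'n^'n \<Rightarrow> real^'n^'n" where
  "mat_sqrt A = (THE B. pos_def_mat B \<and> B ** B = A)"

definition mat_isqrt :: "real^'n^'n \<Rightarrow> real^'n^'n" where
  "mat_isqrt A = matrix_inv (mat_sqrt A)"

definition blk11 :: "real^('a::finite+'b::finite)^('a+'b) \<Rightarrow> real^'a^'a" where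
  "blk11 Q = (\<chi> i j. Q $ Inl i $ Inl j)"
definition blk12 :: "real^('a::finite+'b::finite)^('a+'b) \<Rightarrow> real^'b^'a" where
  "blk12 Q = (\<chi> i j. Q $ Inl i $ Inr j)"
definition blk21 :: "real^('a::finite+'b::finite)^('a+'b) \<Rightarrow> real^'a^'b" where
  "blk21 Q = (\<chi> i j. Q $ Inr i $ Inl j)"
definition blk22 :: "real^('a::finite+'b::finite)^('a+'b) \<Rightarrow> real^'b^'b" where
  "blk22 Q = (\<chi> i j. Q $ Inr i $ Inr j)"

definition joinv :: "real^'a::finite \<Rightarrow> real^'b::finite \<Rightarrow> real^('a+'b)" where
  "joinv t1 t2 = (\<chi> i. case i of Inl j \<Rightarrow> t1 $ j | Inr j \<Rightarrow> t2 $ j)"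

definition hfun :: "real \<Rightarrow> real \<Rightarrow> real \<Rightarrow> real" where
  "hfun a b \<xi> = \<xi> / (1 + a * exp (-(\<xi>\<^sup>2) / b))"
definition gfun :: "real \<Rightarrow> real \<Rightarrow> real \<Rightarrow> real" where
  "gfun a b y = (THE \<xi>. \<xi> \<ge> 0 \<and> hfun a b \<xi> = y)"

text \<open>f_{inf,inf}: the N(0, sigma^2 Q^(-1)) density at t = (t1,t2).\<close>
definition f_inf_inf :: "real \<Rightarrow> real^('a::finite+'b::finite)^('a+'b) \<Rightarrow> (real^'a) \<times> (real^'b) \<Rightarrow> real" where
  "f_inf_inf \<sigma> Q t =
     (let x = joinv (fst t) (snd t); k = CARD('a) + CARD('b) in
      (2 * pi * \<sigma>\<^sup>2) powr (- real k / 2) * sqrt (det Q) * exp (- (x \<bullet> (Q *v x)) / (2 * \<sigma>\<^sup>2)))"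

definition f_inf_gamma :: "real \<Rightarrow> real \<Rightarrow> real^('a::finite+'b::finite)^('a+'b) \<Rightarrow> real^'b \<Rightarrow> (real^'a) \<times> (real^'b) \<Rightarrow> real" where
  "f_inf_gamma \<sigma> \<alpha> Q \<gamma> t =
     (let t1 = fst t; t2 = snd t;
          k1 = CARD('a); k2 = CARD('b); k = k1 + k2;
          Q11 = blk11 Q; Q12 = blk12 Q; Q21 = blk21 Q; Q22 = blk22 Q;
          Dinv = mat_sqrt (Q22 - Q21 ** matrix_inv Q11 ** Q12);
          w = Dinv *v (t2 + \<gamma>);
          a = exp (2 * \<alpha> * real k2); b = \<sigma>\<^sup>2 / \<alpha>;
          G = gfun a b (norm w)
      in (2 * pi * \<sigma>\<^sup>2) powr (- real k / 2) * sqrt (det Q)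
         * exp (- (norm (mat_sqrt Q11 *v t1 + mat_isqrt Q11 *v (Q12 *v t2)))\<^sup>2 / (2 * \<sigma>\<^sup>2))
         * (1 + exp (- \<alpha> * G\<^sup>2 / \<sigma>\<^sup>2 + 2 * \<alpha> * real k2)) ^ k2
         * inverse (1 + 2 * \<alpha> * G\<^sup>2 / \<sigma>\<^sup>2
                      * inverse (1 + exp (\<alpha> * G\<^sup>2 / \<sigma>\<^sup>2 - 2 * \<alpha> * real k2)))
         * exp (- (norm ((if w = 0 then 0 else scaleR (G / norm w) w) - Dinv *v \<gamma>))\<^sup>2 / (2 * \<sigma>\<^sup>2)))"

definition tv_dist :: "'c::topological_space measure \<Rightarrow> 'c measure \<Rightarrow> real" where
  "tv_dist M N = (SUP A \<in> sets borel. \<bar>measure M A - measure N A\<bar>)"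

end

theory Submission
  imports Defs "HOL-Probability.Distributions" "HOL-Real_Asymp.Real_Asymp"
begin

text \<open>
  Write S for the Schur complement Q22 - Q21 Q11^-1 Q12, so that D_inf2^-1 = S^(1/2).
  Completing the square, x'Qx = |Q11^(1/2) t1 + Q11^(-1/2) Q12 t2|^2 + |S^(1/2) t2|^2, hence
  f_inf,gamma differs from f_inf,inf only by a correction factor depending on G alone and by
  having z = G w/|w| - S^(1/2) gamma in place of S^(1/2) t2. Since w = S^(1/2) (t2 + gamma), the
  vector z lies within G - |w| = g(|w|) - |w| of S^(1/2) t2, and g(y) - y is bounded and tends
  to 0 as y grows. As |gamma| -> inf also |w| -> inf, which drives the correction factor to 1
  and gives pointwise convergence. The bounded error and positive definiteness of Q yield a
  Gaussian bound K exp(-c|t|^2) uniform in gamma; dominated convergence then gives convergence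
  in L1, and the L1 distance bounds the total variation distance.
\<close>

section \<open>Symmetric and positive definite matrices\<close>

lemma symmetric_matrix_inner:
  fixes A :: "real^'n^'n"
  assumes "transpose A = A"
  shows "(A *v x) \<bullet> y = x \<bullet> (A *v y)"
  by (metis assms dot_lmul_matrix vector_transpose_matrix)

lemma symmetric_matrixI:
  fixes A :: "real^'n^'n"
  assumes "\<And>x y. (A *v x) \<bullet> y = x \<bullet> (A *v y)"
  shows "transpose A = A"
proof -
  have "transpose A *v y = A *v y" for y
  proof -
    have "x \<bullet> (transpose A *v y) = x \<bullet> (A *v y)" for x
      by (metis assms dot_lmul_matrix inner_commute transpose_matrix_vector)
    then have "(transpose A *v y - A *v y) \<bullet> (transpose A *v y - A *v y) = 0"
      by (metis inner_diff_right right_minus_eq)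
    then show ?thesis by simp
  qed
  then show ?thesis by (simp add: matrix_eq)
qed

lemma quadratic_nonneg_imp_linear_coeff_0:
  fixes B c :: real
  assumes "\<And>t. 0 \<le> 2*t*B + t^2*c"
  shows "B = 0"
proof (rule ccontr)
  assume "B \<noteq> 0"
  define d where "d = \<bar>c\<bar> + 1"
  define t where "t = - B / d"
  have "d > 0" unfolding d_def by simp
  have "0 \<le> (2*t*B + t^2*c) * d^2" using assms[of t] by simp
  also have "\<dots> = B^2 * (c - 2*d)"
    using \<open>d > 0\<close> unfolding t_def by (simp add: field_simps power2_eq_square)
  also have "\<dots> < 0"
    using \<open>B \<noteq> 0\<close> unfolding d_def by (intro mult_pos_neg) auto
  finally show False by simp
qed

lemma symmetric_matrix_eigenvector_in_invariant_subspace: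
  fixes A :: "real^'n^'n"
  assumes sym: "transpose A = A" and V: "subspace V" and inv: "\<And>x. x \<in> V \<Longrightarrow> A *v x \<in> V"
    and "x0 \<in> V" "x0 \<noteq> 0"
  shows "\<exists>v\<in>V. norm v = 1 \<and> A *v v = (v \<bullet> (A *v v)) *\<^sub>R v"
proof -
  define q where "q x = x \<bullet> (A *v x)" for x
  let ?S = "V \<inter> sphere 0 1"
  have "compact ?S"
    by (intro closed_Int_compact closed_subspace V compact_sphere)
  moreover have "x0 /\<^sub>R norm x0 \<in> ?S"
    using \<open>x0 \<in> V\<close> \<open>x0 \<noteq> 0\<close> V by (simp add: subspace_scale)
  moreover have "continuous_on ?S q"
    unfolding q_def by (intro continuous_intros linear_continuous_on) (simp add: linear_conv_bounded_linear)
  ultimately obtain v where v: "v \<in> ?S" and vmax: "\<And>y. y \<in> ?S \<Longrightarrow> q y \<le> q v"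
    using continuous_attains_sup[of ?S q] by blast
  define l where "l = q v"
  have vV: "v \<in> V" and "v \<bullet> v = 1" using v by (auto simp: norm_eq_1)
  have le: "q x \<le> l * (x \<bullet> x)" if "x \<in> V" for x
  proof (cases "x = 0")
    case False
    have "x /\<^sub>R norm x \<in> ?S" using False that V by (simp add: subspace_scale)
    then have "q (x /\<^sub>R norm x) \<le> l" using vmax l_def by blast
    moreover have "q (x /\<^sub>R norm x) = q x / (norm x)^2"
      by (simp add: q_def matrix_vector_mult_scaleR power2_eq_square divide_inverse)
    ultimately have "q x \<le> l * (norm x)^2" using False by (simp add: divide_le_eq)
    then show ?thesis by (simp add: power2_norm_eq_inner)
  qed (simp add: q_def)
  \<comment> \<open>v maximises q on the unit sphere of V, so t |-> l |v + t w|^2 - q (v + t w) is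
      minimal at t = 0 and its linear coefficient vanishes.\<close>
  have orth: "w \<bullet> (l *\<^sub>R v - A *v v) = 0" if "w \<in> V" for w
  proof (rule quadratic_nonneg_imp_linear_coeff_0)
    fix t
    have "v + t *\<^sub>R w \<in> V" using V vV that by (simp add: subspace_add subspace_scale)
    moreover have "v \<bullet> (A *v w) = w \<bullet> (A *v v)"
      by (metis inner_commute sym symmetric_matrix_inner)
    ultimately show "0 \<le> 2 * t * (w \<bullet> (l *\<^sub>R v - A *v v)) + t^2 * (l * (w \<bullet> w) - q w)"
      using le[of "v + t *\<^sub>R w"] \<open>v \<bullet> v = 1\<close> unfolding l_def q_def
      by (simp add: matrix_vector_right_distrib matrix_vector_mult_scaleR inner_add_left
          inner_add_right inner_diff_right inner_commute power2_eq_square algebra_simps)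
  qed
  have "l *\<^sub>R v - A *v v \<in> V" using V vV inv by (simp add: subspace_diff subspace_scale)
  from orth[OF this] have "A *v v = l *\<^sub>R v" by simp
  then show ?thesis using v unfolding l_def q_def by auto
qed

lemma inner_orthonormal_sum:
  fixes E :: "(real^'n) set"
  assumes "finite E" "pairwise orthogonal E" "e' \<in> E" "norm e' = 1"
  shows "e' \<bullet> (\<Sum>e\<in>E. c e *\<^sub>R e) = c e'"
proof -
  have "e' \<bullet> (\<Sum>e\<in>E. c e *\<^sub>R e) = (\<Sum>e\<in>E. if e = e' then c e' else 0)"
    unfolding inner_sum_right
  proof (rule sum.cong)
    fix e assume "e \<in> E"
    show "e' \<bullet> (c e *\<^sub>R e) = (if e = e' then c e' else 0)"
      using assms(2-4) \<open>e \<in> E\<close> by (auto simp: norm_eq_1 pairwise_def orthogonal_def)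
  qed simp
  then show ?thesis using assms(1,3) by simp
qed

lemma symmetric_matrix_eigenvector_orthogonal:
  fixes A :: "real^'n^'n" and E :: "(real^'n) set"
  assumes sym: "transpose A = A" and fin: "finite E" and orth: "pairwise orthogonal E"
    and unit: "\<And>e. e \<in> E \<Longrightarrow> norm e = 1" and eig: "\<And>e. e \<in> E \<Longrightarrow> A *v e = (e \<bullet> (A *v e)) *\<^sub>R e"
    and "x \<noteq> (\<Sum>e\<in>E. (e \<bullet> x) *\<^sub>R e)"
  obtains u where "norm u = 1" "A *v u = (u \<bullet> (A *v u)) *\<^sub>R u" "\<And>e. e \<in> E \<Longrightarrow> e \<bullet> u = 0"
proof -
  \<comment> \<open>The orthogonal complement W of E is A-invariant and contains the residual of x.\<close>
  define W where "W = {y. \<forall>e\<in>E. e \<bullet> y = 0}"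
  have "subspace W" unfolding W_def subspace_def by (simp add: inner_add_right)
  moreover have "A *v y \<in> W" if "y \<in> W" for y
  proof -
    have "e \<bullet> (A *v y) = (e \<bullet> (A *v e)) * (e \<bullet> y)" if "e \<in> E" for e
      by (metis eig[OF that] inner_scaleR_left symmetric_matrix_inner[OF sym])
    then show ?thesis using \<open>y \<in> W\<close> unfolding W_def by simp
  qed
  moreover have "x - (\<Sum>e\<in>E. (e \<bullet> x) *\<^sub>R e) \<in> W"
    unfolding W_def using inner_orthonormal_sum[OF fin orth _ unit] by (simp add: inner_diff_right)
  moreover have "x - (\<Sum>e\<in>E. (e \<bullet> x) *\<^sub>R e) \<noteq> 0" using assms(6) by simp
  ultimately obtain u where "u \<in> W" "norm u = 1" "A *v u = (u \<bullet> (A *v u)) *\<^sub>R u"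
    using symmetric_matrix_eigenvector_in_invariant_subspace[OF sym] by blast
  then show thesis using that unfolding W_def by blast
qed

lemma symmetric_matrix_orthonormal_eigenbasis:
  fixes A :: "real^'n^'n"
  assumes sym: "transpose A = A"
  obtains E where "finite E" "pairwise orthogonal E"
    "\<And>e. e \<in> E \<Longrightarrow> norm e = 1" "\<And>e. e \<in> E \<Longrightarrow> A *v e = (e \<bullet> (A *v e)) *\<^sub>R e"
    "\<And>x. x = (\<Sum>e\<in>E. (e \<bullet> x) *\<^sub>R e)"
proof -
  define P where "P E \<longleftrightarrow> (\<forall>e\<in>E. norm e = 1 \<and> A *v e = (e \<bullet> (A *v e)) *\<^sub>R e) \<and> pairwise orthogonal E"
    for E :: "(real^'n) set"
  have bound: "finite E \<and> card E \<le> DIM(real^'n)" if "P E" for E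
  proof -
    have "0 \<notin> E" using that unfolding P_def by force
    then have "independent E" using that unfolding P_def by (intro pairwise_orthogonal_independent) auto
    then show ?thesis by (rule independent_bound)
  qed
  have "P {}" unfolding P_def by simp
  then obtain E where PE: "P E" and Emax: "\<And>E'. P E' \<Longrightarrow> card E' \<le> card E"
    using ex_has_greatest_nat[of P "{}" card "DIM(real^'n) + 1"] bound by fastforce
  have fin: "finite E" using bound[OF PE] by simp
  have unit: "\<And>e. e \<in> E \<Longrightarrow> norm e = 1" and orth: "pairwise orthogonal E"
    and eig: "\<And>e. e \<in> E \<Longrightarrow> A *v e = (e \<bullet> (A *v e)) *\<^sub>R e"
    using PE unfolding P_def by auto
  have "x = (\<Sum>e\<in>E. (e \<bullet> x) *\<^sub>R e)" for x
  proof (rule ccontr)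
    assume "x \<noteq> (\<Sum>e\<in>E. (e \<bullet> x) *\<^sub>R e)"
    then obtain u where u: "norm u = 1" "A *v u = (u \<bullet> (A *v u)) *\<^sub>R u" "\<And>e. e \<in> E \<Longrightarrow> e \<bullet> u = 0"
      using symmetric_matrix_eigenvector_orthogonal[OF sym fin orth unit eig] by blast
    have "u \<notin> E"
    proof
      assume "u \<in> E"
      then have "u \<bullet> u = 0" using u(3) by blast
      then show False using u(1) by simp
    qed
    moreover have "pairwise orthogonal (insert u E)"
      using orth u(3) by (auto simp: pairwise_insert orthogonal_def inner_commute)
    ultimately have "P (insert u E)" unfolding P_def using unit eig u by auto
    with Emax[of "insert u E"] \<open>u \<notin> E\<close> fin show False by simp
  qed
  then show thesis using that fin orth unit eig by blast
qed
lemma pos_def_mat_symmetric: "pos_def_mat A \<Longrightarrow> transpose A = A"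
  by (simp add: pos_def_mat_def)

lemma pos_def_mat_pos: "pos_def_mat A \<Longrightarrow> x \<noteq> 0 \<Longrightarrow> x \<bullet> (A *v x) > 0"
  by (simp add: pos_def_mat_def)

lemma matrix_vector_mult_sum: "(A::real^'n^'m) *v (\<Sum>e\<in>E. g e) = (\<Sum>e\<in>E. A *v g e)"
  by (rule real_vector.linear_sum[OF matrix_vector_mul_linear])

definition spectral_matrix :: "(real^'n) set \<Rightarrow> (real^'n \<Rightarrow> real) \<Rightarrow> real^'n^'n" where
  "spectral_matrix E \<mu> = matrix (\<lambda>x. \<Sum>e\<in>E. (\<mu> e * (e \<bullet> x)) *\<^sub>R e)"

lemma spectral_matrix_mult_vec: "spectral_matrix E \<mu> *v x = (\<Sum>e\<in>E. (\<mu> e * (e \<bullet> x)) *\<^sub>R e)"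
proof -
  have "linear (\<lambda>x. \<Sum>e\<in>E. (\<mu> e * (e \<bullet> x)) *\<^sub>R e)"
    by (rule linearI) (simp_all add: inner_add_right algebra_simps sum.distrib scaleR_sum_right)
  then show ?thesis by (simp add: spectral_matrix_def matrix_works)
qed

lemma spectral_matrix_mult_spectral_matrix_vec:
  fixes E :: "(real^'n) set"
  assumes "finite E" "pairwise orthogonal E" "\<And>e. e \<in> E \<Longrightarrow> norm e = 1"
  shows "spectral_matrix E \<mu> *v (spectral_matrix E \<nu> *v x) = (\<Sum>e\<in>E. (\<mu> e * \<nu> e * (e \<bullet> x)) *\<^sub>R e)"
  unfolding spectral_matrix_mult_vec[of E \<mu>]
  by (rule sum.cong) (simp_all add: spectral_matrix_mult_vec inner_orthonormal_sum assms mult.assoc)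

lemma pos_def_spectral_matrix:
  fixes E :: "(real^'n) set"
  assumes "finite E" "pairwise orthogonal E" "\<And>e. e \<in> E \<Longrightarrow> norm e = 1"
    and expand: "\<And>x. x = (\<Sum>e\<in>E. (e \<bullet> x) *\<^sub>R e)" and pos: "\<And>e. e \<in> E \<Longrightarrow> \<mu> e > 0"
  shows "pos_def_mat (spectral_matrix E \<mu>)"
  unfolding pos_def_mat_def
proof (intro conjI allI impI)
  have inner: "(spectral_matrix E \<mu> *v x) \<bullet> y = (\<Sum>e\<in>E. \<mu> e * (e \<bullet> x) * (e \<bullet> y))" for x y
    by (simp add: spectral_matrix_mult_vec inner_sum_left)
  show "transpose (spectral_matrix E \<mu>) = spectral_matrix E \<mu>"
    by (rule symmetric_matrixI) (simp add: inner inner_commute[of _ "spectral_matrix E \<mu> *v _"] mult_ac)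
  fix x :: "real^'n" assume "x \<noteq> 0"
  then obtain e0 where e0: "e0 \<in> E" "e0 \<bullet> x \<noteq> 0"
    using expand[of x] by (metis (no_types, lifting) scale_eq_0_iff sum.neutral)
  have "0 < (\<Sum>e\<in>E. \<mu> e * (e \<bullet> x) * (e \<bullet> x))"
    using e0 pos
    by (intro sum_pos2[OF assms(1) e0(1)]) (auto simp: mult.assoc less_imp_le zero_less_mult_iff linorder_neq_iff)
  also have "\<dots> = (spectral_matrix E \<mu> *v x) \<bullet> x" by (simp add: inner)
  finally show "x \<bullet> (spectral_matrix E \<mu> *v x) > 0" by (simp only: inner_commute)
qed

lemma pos_def_mat_sqrt_exists:
  fixes A :: "real^'n^'n"
  assumes pd: "pos_def_mat A"
  shows "\<exists>B. pos_def_mat B \<and> B ** B = A"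
proof -
  obtain E where fin: "finite E" and orth: "pairwise orthogonal E"
    and unit: "\<And>e. e \<in> E \<Longrightarrow> norm e = 1" and eig: "\<And>e. e \<in> E \<Longrightarrow> A *v e = (e \<bullet> (A *v e)) *\<^sub>R e"
    and expand: "\<And>x. x = (\<Sum>e\<in>E. (e \<bullet> x) *\<^sub>R e)"
    using symmetric_matrix_orthonormal_eigenbasis[OF pos_def_mat_symmetric[OF pd]] by blast
  define l where "l e = e \<bullet> (A *v e)" for e
  have l_pos: "l e > 0" if "e \<in> E" for e
  proof -
    have "e \<noteq> 0" using unit[OF that] by auto
    then show ?thesis using pos_def_mat_pos[OF pd] unfolding l_def by blast
  qed
  define B where "B = spectral_matrix E (\<lambda>e. sqrt (l e))"
  have "(B ** B) *v x = A *v x" for x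
  proof -
    have "(B ** B) *v x = (\<Sum>e\<in>E. (sqrt (l e) * sqrt (l e) * (e \<bullet> x)) *\<^sub>R e)"
      unfolding B_def matrix_vector_mul_assoc[symmetric]
      by (rule spectral_matrix_mult_spectral_matrix_vec[OF fin orth unit])
    also have "\<dots> = (\<Sum>e\<in>E. (e \<bullet> x) *\<^sub>R (l e *\<^sub>R e))"
      by (rule sum.cong) (simp_all add: l_pos less_imp_le)
    also have "\<dots> = A *v (\<Sum>e\<in>E. (e \<bullet> x) *\<^sub>R e)"
      by (simp add: matrix_vector_mult_sum matrix_vector_mult_scaleR eig[folded l_def])
    finally show ?thesis using expand[of x] by simp
  qed
  then have "B ** B = A" by (simp add: matrix_eq)
  moreover have "pos_def_mat B"
    unfolding B_def using fin orth unit expand l_pos by (intro pos_def_spectral_matrix) auto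
  ultimately show ?thesis by blast
qed
lemma pos_def_mat_sqrt_unique:
  fixes B C :: "real^'n^'n"
  assumes pB: "pos_def_mat B" and pC: "pos_def_mat C" and eq: "B ** B = C ** C"
  shows "B = C"
proof -
  define D where "D = B - C"
  have symD: "transpose D = D"
    by (rule symmetric_matrixI) (simp add: D_def matrix_vector_mult_diff_rdistrib inner_diff_left
        inner_diff_right symmetric_matrix_inner[OF pos_def_mat_symmetric[OF pB]]
        symmetric_matrix_inner[OF pos_def_mat_symmetric[OF pC]])
  obtain E where "finite E" "pairwise orthogonal E" and unit: "\<And>e. e \<in> E \<Longrightarrow> norm e = 1"
    and eig: "\<And>e. e \<in> E \<Longrightarrow> D *v e = (e \<bullet> (D *v e)) *\<^sub>R e"
    and expand: "\<And>x. x = (\<Sum>e\<in>E. (e \<bullet> x) *\<^sub>R e)"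
    using symmetric_matrix_orthonormal_eigenbasis[OF symD] by blast
  \<comment> \<open>For an eigenvector e of D with eigenvalue m, pairing D B e + C D e = B^2 e - C^2 e = 0
      with e gives m (e.Be + e.Ce) = 0.\<close>
  have D_eig_0: "D *v e = 0" if "e \<in> E" for e
  proof -
    define m where "m = e \<bullet> (D *v e)"
    have De: "D *v e = m *\<^sub>R e" using eig[OF that] m_def by simp
    have "D *v (B *v e) + C *v (D *v e) = B *v (B *v e) - C *v (C *v e)"
      by (simp add: D_def matrix_vector_mult_diff_rdistrib matrix_vector_mult_diff_distrib)
    also have "\<dots> = 0" by (simp add: matrix_vector_mul_assoc eq)
    finally have "e \<bullet> (D *v (B *v e)) + e \<bullet> (C *v (D *v e)) = 0"
      by (metis inner_add_right inner_zero_right)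
    then have "m * (e \<bullet> (B *v e) + e \<bullet> (C *v e)) = 0"
      by (simp add: symmetric_matrix_inner[OF symD, symmetric] De matrix_vector_mult_scaleR
          distrib_left)
    moreover have "e \<bullet> (B *v e) + e \<bullet> (C *v e) > 0"
    proof -
      have "e \<noteq> 0" using unit[OF that] by auto
      then show ?thesis using pos_def_mat_pos[OF pB] pos_def_mat_pos[OF pC] by (simp add: add_pos_pos)
    qed
    ultimately show ?thesis using De by simp
  qed
  have "D *v x = 0 *v x" for x
  proof -
    have "D *v x = D *v (\<Sum>e\<in>E. (e \<bullet> x) *\<^sub>R e)" using expand[of x] by simp
    also have "\<dots> = 0" by (simp add: matrix_vector_mult_sum matrix_vector_mult_scaleR D_eig_0)
    finally show ?thesis by simp
  qed
  then have "D = 0" by (simp add: matrix_eq)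
  then show ?thesis unfolding D_def by simp
qed

lemma
  fixes A :: "real^'n^'n"
  assumes "pos_def_mat A"
  shows pos_def_mat_sqrt: "pos_def_mat (mat_sqrt A)"
    and mat_sqrt_mult_self: "mat_sqrt A ** mat_sqrt A = A"
proof -
  have "\<exists>!B. pos_def_mat B \<and> B ** B = A"
    using pos_def_mat_sqrt_exists[OF assms] pos_def_mat_sqrt_unique by blast
  then have "pos_def_mat (mat_sqrt A) \<and> mat_sqrt A ** mat_sqrt A = A"
    unfolding mat_sqrt_def by (rule theI')
  then show "pos_def_mat (mat_sqrt A)" "mat_sqrt A ** mat_sqrt A = A" by auto
qed

lemma mat_sqrt_inner: "pos_def_mat A \<Longrightarrow> (mat_sqrt A *v x) \<bullet> y = x \<bullet> (mat_sqrt A *v y)"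
  using pos_def_mat_sqrt pos_def_mat_symmetric symmetric_matrix_inner by blast

lemma mat_sqrt_mult_self_vec: "pos_def_mat A \<Longrightarrow> mat_sqrt A *v (mat_sqrt A *v x) = A *v x"
  by (metis mat_sqrt_mult_self matrix_vector_mul_assoc)

lemma norm_mat_sqrt_sq: "pos_def_mat A \<Longrightarrow> (norm (mat_sqrt A *v x))\<^sup>2 = x \<bullet> (A *v x)"
  by (simp add: power2_norm_eq_inner mat_sqrt_inner mat_sqrt_mult_self_vec)

lemma
  fixes A :: "real^'n^'n"
  assumes "pos_def_mat A"
  shows matrix_inv_left_pos_def: "matrix_inv A ** A = mat 1"
    and matrix_inv_right_pos_def: "A ** matrix_inv A = mat 1"
proof -
  have "\<forall>x. A *v x = 0 \<longrightarrow> x = 0" using pos_def_mat_pos[OF assms] by force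
  then have "invertible A" by (simp add: invertible_left_inverse matrix_left_invertible_ker)
  then have "A ** matrix_inv A = mat 1 \<and> matrix_inv A ** A = mat 1"
    unfolding invertible_def matrix_inv_def by (rule someI_ex)
  then show "matrix_inv A ** A = mat 1" "A ** matrix_inv A = mat 1" by auto
qed

lemma matrix_inv_pos_def_inner:
  fixes A :: "real^'n^'n"
  assumes "pos_def_mat A"
  shows "(matrix_inv A *v x) \<bullet> y = x \<bullet> (matrix_inv A *v y)"
proof -
  have "(matrix_inv A *v x) \<bullet> y = (matrix_inv A *v x) \<bullet> (A *v (matrix_inv A *v y))"
    by (simp add: matrix_vector_mul_assoc matrix_inv_right_pos_def[OF assms])
  also have "\<dots> = (A *v (matrix_inv A *v x)) \<bullet> (matrix_inv A *v y)"
    by (simp add: symmetric_matrix_inner[OF pos_def_mat_symmetric[OF assms]])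
  also have "\<dots> = x \<bullet> (matrix_inv A *v y)"
    by (simp add: matrix_vector_mul_assoc matrix_inv_right_pos_def[OF assms])
  finally show ?thesis .
qed

lemma pos_def_mat_norm_lower_bound:
  fixes A :: "real^'n^'n"
  assumes "pos_def_mat A"
  obtains e where "e > 0" "\<And>x. e * norm x \<le> norm (A *v x)"
proof -
  have "\<forall>x\<in>UNIV. A *v x = 0 \<longrightarrow> x = 0" using pos_def_mat_pos[OF assms] by force
  then show thesis using injective_imp_isometric[of UNIV "(*v) A"] that by auto
qed

lemma pos_def_mat_quadratic_lower_bound:
  fixes A :: "real^'n^'n"
  assumes "pos_def_mat A"
  obtains m where "m > 0" "\<And>x. m * (norm x)\<^sup>2 \<le> x \<bullet> (A *v x)"
proof -
  obtain e where "e > 0" and e: "\<And>x. e * norm x \<le> norm (mat_sqrt A *v x)"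
    using pos_def_mat_norm_lower_bound[OF pos_def_mat_sqrt[OF assms]] by blast
  have "e\<^sup>2 * (norm x)\<^sup>2 \<le> x \<bullet> (A *v x)" for x
  proof -
    have "e\<^sup>2 * (norm x)\<^sup>2 \<le> (norm (mat_sqrt A *v x))\<^sup>2"
      using \<open>e > 0\<close> e[of x] by (metis power_mono power_mult_distrib mult_nonneg_nonneg
          less_imp_le norm_ge_zero)
    then show ?thesis by (simp add: norm_mat_sqrt_sq[OF assms])
  qed
  then show thesis using that[of "e\<^sup>2"] \<open>e > 0\<close> by simp
qed

lemma filterlim_norm_pos_def_at_infinity:
  fixes A :: "real^'n^'n"
  assumes "pos_def_mat A"
  shows "filterlim (\<lambda>\<gamma>. norm (A *v (x + \<gamma>))) at_top at_infinity"
proof -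
  obtain e where "e > 0" and e: "\<And>x. e * norm x \<le> norm (A *v x)"
    using pos_def_mat_norm_lower_bound[OF assms] by blast
  show ?thesis unfolding filterlim_at_top eventually_at_infinity
  proof (intro allI exI impI)
    fix Z :: real and \<gamma> :: "real^'n"
    assume "Z / e + norm x \<le> norm \<gamma>"
    then have "Z \<le> e * (norm \<gamma> - norm x)" using \<open>e > 0\<close> by (simp add: field_simps)
    also have "\<dots> \<le> e * norm (x + \<gamma>)"
      using \<open>e > 0\<close> norm_triangle_ineq2[of \<gamma> "- x"] by (intro mult_left_mono) (auto simp: add.commute)
    also have "\<dots> \<le> norm (A *v (x + \<gamma>))" by (rule e)
    finally show "Z \<le> norm (A *v (x + \<gamma>))" .
  qed
qed

section \<open>Block matrices and the Schur complement\<close>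

lemma sum_UNIV_Plus:
  "(\<Sum>i\<in>(UNIV::('a::finite + 'b::finite) set). g i) = (\<Sum>j\<in>UNIV. g (Inl j)) + (\<Sum>j\<in>UNIV. g (Inr j))"
  by (subst UNIV_Plus_UNIV[symmetric], subst sum.Plus) (simp_all add: o_def)

lemma joinv_Inl [simp]: "joinv t1 t2 $ Inl j = t1 $ j"
  by (simp add: joinv_def)

lemma joinv_Inr [simp]: "joinv t1 t2 $ Inr j = t2 $ j"
  by (simp add: joinv_def)

lemma inner_joinv: "joinv a b \<bullet> joinv c d = a \<bullet> c + b \<bullet> d"
  by (simp add: inner_vec_def sum_UNIV_Plus)

lemma norm_joinv: "norm (joinv a b) = norm (a, b)"
  by (simp add: norm_Pair norm_eq_sqrt_inner inner_joinv)

lemma joinv_eq_0_iff: "joinv a b = 0 \<longleftrightarrow> a = 0 \<and> b = 0"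
proof -
  have "joinv a b = 0 \<longleftrightarrow> a \<bullet> a + b \<bullet> b = 0" by (simp flip: inner_joinv)
  also have "\<dots> \<longleftrightarrow> a = 0 \<and> b = 0" by (simp add: add_nonneg_eq_0_iff)
  finally show ?thesis .
qed

lemma matrix_vector_mult_joinv:
  fixes Q :: "real^('a::finite+'b::finite)^('a+'b)"
  shows "Q *v joinv t1 t2 = joinv (blk11 Q *v t1 + blk12 Q *v t2) (blk21 Q *v t1 + blk22 Q *v t2)"
proof -
  have "(Q *v joinv t1 t2) $ i = joinv (blk11 Q *v t1 + blk12 Q *v t2) (blk21 Q *v t1 + blk22 Q *v t2) $ i" for i
    by (cases i) (simp_all add: matrix_vector_mult_def sum_UNIV_Plus blk11_def blk12_def blk21_def blk22_def)
  then show ?thesis by (simp add: vec_eq_iff)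
qed

lemma inner_joinv_matrix_joinv:
  fixes Q :: "real^('a::finite+'b::finite)^('a+'b)"
  shows "joinv t1 t2 \<bullet> (Q *v joinv t1 t2)
    = t1 \<bullet> (blk11 Q *v t1) + t1 \<bullet> (blk12 Q *v t2) + t2 \<bullet> (blk21 Q *v t1) + t2 \<bullet> (blk22 Q *v t2)"
  by (simp add: matrix_vector_mult_joinv inner_joinv inner_add_right)

lemma
  fixes Q :: "real^('a::finite+'b::finite)^('a+'b)"
  assumes "transpose Q = Q"
  shows blk12_inner: "(blk12 Q *v b) \<bullet> c = b \<bullet> (blk21 Q *v c)"
    and blk11_inner: "(blk11 Q *v a) \<bullet> c = a \<bullet> (blk11 Q *v c)"
    and blk22_inner: "(blk22 Q *v b) \<bullet> d = b \<bullet> (blk22 Q *v d)"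
  using symmetric_matrix_inner[OF assms, of "joinv 0 b" "joinv c 0"]
    symmetric_matrix_inner[OF assms, of "joinv a 0" "joinv c 0"]
    symmetric_matrix_inner[OF assms, of "joinv 0 b" "joinv 0 d"]
  by (simp_all add: matrix_vector_mult_joinv inner_joinv inner_commute)

lemma pos_def_blk11:
  fixes Q :: "real^('a::finite+'b::finite)^('a+'b)"
  assumes "pos_def_mat Q"
  shows "pos_def_mat (blk11 Q)"
  unfolding pos_def_mat_def
proof (intro conjI allI impI)
  show "transpose (blk11 Q) = blk11 Q"
    by (rule symmetric_matrixI) (rule blk11_inner[OF pos_def_mat_symmetric[OF assms]])
  fix x :: "real^'a" assume "x \<noteq> 0"
  then show "x \<bullet> (blk11 Q *v x) > 0"
    using pos_def_mat_pos[OF assms, of "joinv x 0"]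
    by (simp add: joinv_eq_0_iff matrix_vector_mult_joinv inner_joinv)
qed

definition schur_complement :: "real^('a::finite+'b::finite)^('a+'b) \<Rightarrow> real^'b^'b" where
  "schur_complement Q = blk22 Q - blk21 Q ** matrix_inv (blk11 Q) ** blk12 Q"

lemma inner_schur_complement:
  fixes Q :: "real^('a::finite+'b::finite)^('a+'b)"
  assumes "pos_def_mat Q"
  shows "x \<bullet> (schur_complement Q *v y)
    = x \<bullet> (blk22 Q *v y) - (blk12 Q *v x) \<bullet> (matrix_inv (blk11 Q) *v (blk12 Q *v y))"
  using blk12_inner[OF pos_def_mat_symmetric[OF assms]]
  by (simp add: schur_complement_def matrix_vector_mult_diff_rdistrib inner_diff_right
      flip: matrix_vector_mul_assoc)

lemma pos_def_schur_complement:
  fixes Q :: "real^('a::finite+'b::finite)^('a+'b)"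
  assumes pd: "pos_def_mat Q"
  shows "pos_def_mat (schur_complement Q)"
  unfolding pos_def_mat_def
proof (intro conjI allI impI)
  show "transpose (schur_complement Q) = schur_complement Q"
  proof (rule symmetric_matrixI)
    fix x y
    have "y \<bullet> (blk22 Q *v x) = x \<bullet> (blk22 Q *v y)"
      by (metis blk22_inner[OF pos_def_mat_symmetric[OF pd]] inner_commute)
    moreover have "(blk12 Q *v y) \<bullet> (matrix_inv (blk11 Q) *v (blk12 Q *v x))
        = (blk12 Q *v x) \<bullet> (matrix_inv (blk11 Q) *v (blk12 Q *v y))"
      by (metis matrix_inv_pos_def_inner[OF pos_def_blk11[OF pd]] inner_commute)
    ultimately show "(schur_complement Q *v x) \<bullet> y = x \<bullet> (schur_complement Q *v y)"
      by (simp add: inner_commute[of "schur_complement Q *v x"] inner_schur_complement[OF pd])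
  qed
  fix t2 :: "real^'b" assume "t2 \<noteq> 0"
  \<comment> \<open>t1 = -Q11^-1 Q12 t2 minimises the quadratic form in t1, with minimum t2.S t2.\<close>
  define u where "u = blk12 Q *v t2"
  define t1 where "t1 = - (matrix_inv (blk11 Q) *v u)"
  have "blk11 Q *v t1 = - u"
    using matrix_vector_mult_scaleR[of "blk11 Q" "-1"]
    by (simp add: t1_def matrix_vector_mul_assoc matrix_inv_right_pos_def[OF pos_def_blk11[OF pd]])
  moreover have "joinv t1 t2 \<noteq> 0" using \<open>t2 \<noteq> 0\<close> by (simp add: joinv_eq_0_iff)
  ultimately have "0 < t1 \<bullet> (- u) + t1 \<bullet> u + t2 \<bullet> (blk21 Q *v t1) + t2 \<bullet> (blk22 Q *v t2)"
    using pos_def_mat_pos[OF pd, of "joinv t1 t2"] by (simp add: inner_joinv_matrix_joinv u_def)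
  also have "\<dots> = t2 \<bullet> (schur_complement Q *v t2)"
    using blk12_inner[OF pos_def_mat_symmetric[OF pd], of t2 t1]
    by (simp add: inner_schur_complement[OF pd] u_def[symmetric] t1_def inner_commute)
  finally show "t2 \<bullet> (schur_complement Q *v t2) > 0" .
qed

lemma quadratic_form_completing_square:
  fixes Q :: "real^('a::finite+'b::finite)^('a+'b)"
  assumes pd: "pos_def_mat Q"
  shows "(norm (mat_sqrt (blk11 Q) *v t1 + mat_isqrt (blk11 Q) *v (blk12 Q *v t2)))\<^sup>2
         + (norm (mat_sqrt (schur_complement Q) *v t2))\<^sup>2 = joinv t1 t2 \<bullet> (Q *v joinv t1 t2)"
proof -
  note pd11 = pos_def_blk11[OF pd]
  define R where "R = mat_sqrt (blk11 Q)"
  define Ri where "Ri = matrix_inv R"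
  define u where "u = blk12 Q *v t2"
  have pdR: "pos_def_mat R" using pos_def_mat_sqrt[OF pd11] R_def by simp
  have RR: "R *v (R *v x) = blk11 Q *v x" for x using mat_sqrt_mult_self_vec[OF pd11] R_def by simp
  have RRi: "R *v (Ri *v x) = x" for x
    by (simp add: Ri_def matrix_vector_mul_assoc matrix_inv_right_pos_def[OF pdR])
  have RiRi: "Ri *v (Ri *v x) = matrix_inv (blk11 Q) *v x" for x
  proof -
    have "blk11 Q *v (Ri *v (Ri *v x)) = x" by (simp flip: RR add: RRi)
    then show ?thesis
      by (metis matrix_vector_mul_assoc matrix_inv_left_pos_def[OF pd11] matrix_vector_mul_lid)
  qed
  have "(R *v t1) \<bullet> (R *v t1) = t1 \<bullet> (blk11 Q *v t1)" "(R *v t1) \<bullet> (Ri *v u) = t1 \<bullet> u"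
    by (simp_all add: symmetric_matrix_inner[OF pos_def_mat_symmetric[OF pdR]] RR RRi)
  moreover have "(Ri *v u) \<bullet> (Ri *v u) = u \<bullet> (matrix_inv (blk11 Q) *v u)"
    using matrix_inv_pos_def_inner[OF pdR, of u "Ri *v u"] RiRi[of u] by (simp add: Ri_def)
  ultimately have "(norm (R *v t1 + Ri *v u))\<^sup>2
      = t1 \<bullet> (blk11 Q *v t1) + 2 * (t1 \<bullet> u) + u \<bullet> (matrix_inv (blk11 Q) *v u)"
    by (simp add: power2_norm_eq_inner inner_add_left inner_add_right inner_commute)
  moreover have "(norm (mat_sqrt (schur_complement Q) *v t2))\<^sup>2
      = t2 \<bullet> (blk22 Q *v t2) - u \<bullet> (matrix_inv (blk11 Q) *v u)"
    by (simp add: norm_mat_sqrt_sq[OF pos_def_schur_complement[OF pd]] inner_schur_complement[OF pd] u_def)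
  moreover have "joinv t1 t2 \<bullet> (Q *v joinv t1 t2) = t1 \<bullet> (blk11 Q *v t1) + 2 * (t1 \<bullet> u) + t2 \<bullet> (blk22 Q *v t2)"
    using blk12_inner[OF pos_def_mat_symmetric[OF pd], of t2 t1]
    by (simp add: inner_joinv_matrix_joinv u_def inner_commute)
  ultimately show ?thesis unfolding mat_isqrt_def R_def[symmetric] Ri_def[symmetric] u_def[symmetric] by simp
qed

section \<open>The functions \<open>h\<close> and \<open>g\<close>\<close>

lemma hfun_less:
  assumes "a > 0" "b > 0" "0 \<le> x" "x < y"
  shows "hfun a b x < hfun a b y"
proof -
  have "x\<^sup>2 \<le> y\<^sup>2" using assms by (intro power_mono) auto
  then have "1 + a * exp (-(y\<^sup>2)/b) \<le> 1 + a * exp (-(x\<^sup>2)/b)"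
    using assms by (simp add: divide_right_mono)
  moreover have "0 < 1 + a * exp (-(y\<^sup>2)/b)" "0 < 1 + a * exp (-(x\<^sup>2)/b)"
    using assms by (simp_all add: add_pos_pos)
  ultimately have "x / (1 + a * exp (-(x\<^sup>2)/b)) \<le> x / (1 + a * exp (-(y\<^sup>2)/b))"
    using assms by (intro divide_left_mono mult_pos_pos) auto
  also have "\<dots> < y / (1 + a * exp (-(y\<^sup>2)/b))"
    using \<open>0 < 1 + a * exp (-(y\<^sup>2)/b)\<close> assms by (simp add: divide_strict_right_mono)
  finally show ?thesis by (simp add: hfun_def)
qed

lemma hfun_le_self: "a > 0 \<Longrightarrow> 0 \<le> x \<Longrightarrow> hfun a b x \<le> x"
  unfolding hfun_def
  by (simp add: divide_le_eq add_pos_nonneg mult_le_cancel_left1 add_nonneg_nonneg)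

lemma continuous_on_hfun:
  assumes "a > 0" "b > 0"
  shows "continuous_on S (hfun a b)"
proof -
  have "1 + a * exp x \<noteq> 0" for x :: real
    using assms by (smt (verit) exp_gt_zero mult_pos_pos)
  then show ?thesis unfolding hfun_def using assms by (intro continuous_intros) auto
qed

lemma ex1_hfun_eq:
  assumes "a > 0" "b > 0" "y \<ge> 0"
  shows "\<exists>!\<xi>. \<xi> \<ge> 0 \<and> hfun a b \<xi> = y"
proof -
  have "0 < 1 + a * exp (-(((1 + a) * y)\<^sup>2)/b)" "1 + a * exp (-(((1 + a) * y)\<^sup>2)/b) \<le> 1 + a"
    using assms by (simp_all add: add_pos_pos mult_left_le)
  then have "y \<le> hfun a b ((1 + a) * y)"
    unfolding hfun_def using assms by (simp add: le_divide_eq mult_left_mono mult.commute)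
  moreover have "hfun a b 0 \<le> y" "0 \<le> (1 + a) * y" using assms by (simp_all add: hfun_def)
  ultimately obtain \<xi> where "\<xi> \<ge> 0" "hfun a b \<xi> = y"
    using IVT'[of "hfun a b" 0 y "(1 + a) * y"] continuous_on_hfun[OF assms(1,2)] by auto
  moreover have "\<xi>1 = \<xi>2" if "\<xi>1 \<ge> 0" "\<xi>2 \<ge> 0" "hfun a b \<xi>1 = y" "hfun a b \<xi>2 = y" for \<xi>1 \<xi>2
    using hfun_less[OF assms(1,2), of \<xi>1 \<xi>2] hfun_less[OF assms(1,2), of \<xi>2 \<xi>1] that
    by (cases "\<xi>1 < \<xi>2"; cases "\<xi>2 < \<xi>1") auto
  ultimately show ?thesis by blast
qed

lemma
  assumes "a > 0" "b > 0" "y \<ge> 0"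
  shows gfun_nonneg: "gfun a b y \<ge> 0"
    and hfun_gfun: "hfun a b (gfun a b y) = y"
  using theI'[OF ex1_hfun_eq[OF assms]] unfolding gfun_def by auto

lemma gfun_ge_self: "a > 0 \<Longrightarrow> b > 0 \<Longrightarrow> y \<ge> 0 \<Longrightarrow> y \<le> gfun a b y"
  by (metis gfun_nonneg hfun_gfun hfun_le_self)

lemma gfun_mono:
  assumes "a > 0" "b > 0" "0 \<le> y1" "y1 \<le> y2"
  shows "gfun a b y1 \<le> gfun a b y2"
proof (rule ccontr)
  assume "\<not> ?thesis"
  then have "hfun a b (gfun a b y2) < hfun a b (gfun a b y1)"
    using assms by (intro hfun_less gfun_nonneg) auto
  then show False using assms hfun_gfun[of a b] by simp
qed

lemma gfun_minus_le:
  assumes "a > 0" "b > 0" "y \<ge> 0"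
  shows "gfun a b y - y \<le> a * (gfun a b y * exp (-((gfun a b y)\<^sup>2)/b))"
proof -
  define G where "G = gfun a b y"
  define E where "E = exp (-(G\<^sup>2)/b)"
  have "G \<ge> 0" using gfun_nonneg[OF assms] G_def by simp
  have "y = G / (1 + a * E)" using hfun_gfun[OF assms] unfolding G_def E_def hfun_def by simp
  moreover have "1 + a * E > 0" using assms by (simp add: E_def add_pos_pos)
  ultimately have "G - y = G * (a * E) / (1 + a * E)" by (simp add: field_simps)
  also have "\<dots> \<le> G * (a * E) / 1"
    using \<open>G \<ge> 0\<close> assms by (intro frac_le) (auto simp: E_def)
  finally show ?thesis unfolding G_def[symmetric] E_def[symmetric] by (simp add: mult_ac)
qed

lemma mult_exp_neg_sq_le:
  fixes b G :: real
  assumes "b > 0" "G \<ge> 0"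
  shows "G * exp (-(G\<^sup>2)/b) \<le> 1 + b"
proof -
  have "0 \<le> (G - 1/2)\<^sup>2" by simp
  then have "G \<le> 1 + G\<^sup>2" by (simp add: power2_eq_square algebra_simps)
  also have "\<dots> \<le> (1 + b) * (1 + G\<^sup>2/b)" using assms by (simp add: field_simps)
  also have "\<dots> \<le> (1 + b) * exp (G\<^sup>2/b)"
    using assms exp_ge_add_one_self[of "G\<^sup>2/b"] by (intro mult_left_mono) auto
  finally show ?thesis by (simp add: exp_minus field_simps)
qed

lemma gfun_minus_bounded:
  assumes "a > 0" "b > 0" "y \<ge> 0"
  shows "gfun a b y - y \<le> a * (1 + b)"
  using gfun_minus_le[OF assms] mult_exp_neg_sq_le[OF assms(2) gfun_nonneg[OF assms]] assms(1)
  by (smt (verit) mult_left_mono)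

lemma filterlim_gfun_at_top: "a > 0 \<Longrightarrow> b > 0 \<Longrightarrow> filterlim (gfun a b) at_top at_top"
  by (rule filterlim_at_top_mono[OF filterlim_ident])
    (auto intro!: eventually_at_top_linorderI[of 0] gfun_ge_self)

lemma gfun_minus_tendsto_0:
  assumes "a > 0" "b > 0"
  shows "((\<lambda>y. gfun a b y - y) \<longlongrightarrow> 0) at_top"
proof (rule tendsto_sandwich[of "\<lambda>_. 0" _ _ "\<lambda>y. a * (gfun a b y * exp (-((gfun a b y)\<^sup>2)/b))"])
  show "\<forall>\<^sub>F y in at_top. 0 \<le> gfun a b y - y"
    by (intro eventually_at_top_linorderI[of 0]) (simp add: gfun_ge_self[OF assms])
  show "\<forall>\<^sub>F y in at_top. gfun a b y - y \<le> a * (gfun a b y * exp (-((gfun a b y)\<^sup>2)/b))"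
    by (intro eventually_at_top_linorderI[of 0]) (rule gfun_minus_le[OF assms])
  have "((\<lambda>G. G * exp (-(G\<^sup>2)/b)) \<longlongrightarrow> 0) at_top" using assms(2) by real_asymp
  from filterlim_compose[OF this filterlim_gfun_at_top[OF assms]]
  show "((\<lambda>y. a * (gfun a b y * exp (-((gfun a b y)\<^sup>2)/b))) \<longlongrightarrow> 0) at_top"
    by (rule tendsto_mult_right_zero)
qed simp

lemma gfun_mono_borel_measurable:
  assumes "a > 0" "b > 0"
  shows "(\<lambda>y. gfun a b (max 0 y)) \<in> borel_measurable borel"
  by (rule borel_measurable_mono) (auto simp: mono_def intro!: gfun_mono[OF assms])

section \<open>The correction factor\<close>

definition correction :: "real \<Rightarrow> real \<Rightarrow> nat \<Rightarrow> real \<Rightarrow> real" where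
  "correction \<sigma> \<alpha> k G =
     (1 + exp (- \<alpha> * G\<^sup>2 / \<sigma>\<^sup>2 + 2 * \<alpha> * real k)) ^ k
     * inverse (1 + 2 * \<alpha> * G\<^sup>2 / \<sigma>\<^sup>2 * inverse (1 + exp (\<alpha> * G\<^sup>2 / \<sigma>\<^sup>2 - 2 * \<alpha> * real k)))"

lemma correction_tendsto_1:
  assumes "\<alpha> > 0" "\<sigma> > 0"
  shows "(correction \<sigma> \<alpha> k \<longlongrightarrow> 1) at_top"
proof -
  have "((\<lambda>G. exp (- \<alpha> * G\<^sup>2 / \<sigma>\<^sup>2 + 2 * \<alpha> * real k)) \<longlongrightarrow> 0) at_top"
    using assms by real_asymp
  moreover have "((\<lambda>G. inverse (1 + 2 * \<alpha> * G\<^sup>2 / \<sigma>\<^sup>2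
      * inverse (1 + exp (\<alpha> * G\<^sup>2 / \<sigma>\<^sup>2 - 2 * \<alpha> * real k)))) \<longlongrightarrow> 1) at_top"
    using assms by real_asymp
  ultimately have "(correction \<sigma> \<alpha> k \<longlongrightarrow> (1 + 0) ^ k * 1) at_top"
    unfolding correction_def[abs_def] by (intro tendsto_intros)
  then show ?thesis by simp
qed

lemma correction_bounds:
  assumes "\<alpha> > 0"
  shows "0 \<le> correction \<sigma> \<alpha> k G" "correction \<sigma> \<alpha> k G \<le> (1 + exp (2 * \<alpha> * real k)) ^ k"
proof -
  define F where "F = (1 + exp (- \<alpha> * G\<^sup>2 / \<sigma>\<^sup>2 + 2 * \<alpha> * real k)) ^ k"
  define X where "X = 2 * \<alpha> * G\<^sup>2 / \<sigma>\<^sup>2 * inverse (1 + exp (\<alpha> * G\<^sup>2 / \<sigma>\<^sup>2 - 2 * \<alpha> * real k))"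
  have "0 \<le> X" unfolding X_def using assms
    by (intro mult_nonneg_nonneg) (auto simp: add_pos_pos less_imp_le)
  then have I: "0 \<le> inverse (1 + X)" "inverse (1 + X) \<le> 1" by (simp_all add: inverse_le_1_iff)
  have "- \<alpha> * G\<^sup>2 / \<sigma>\<^sup>2 \<le> 0" using assms by (simp add: divide_nonpos_nonneg)
  then have F: "0 \<le> F" "F \<le> (1 + exp (2 * \<alpha> * real k)) ^ k"
    unfolding F_def by (auto intro!: power_mono add_nonneg_nonneg simp: less_imp_le)
  have "correction \<sigma> \<alpha> k G = F * inverse (1 + X)" unfolding correction_def F_def X_def ..
  then show "0 \<le> correction \<sigma> \<alpha> k G" "correction \<sigma> \<alpha> k G \<le> (1 + exp (2 * \<alpha> * real k)) ^ k"
    using I F by (simp_all add: mult_left_le order_trans[OF mult_left_le])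
qed

section \<open>Dominated convergence and total variation\<close>

lemma integrable_exp_neg_sq:
  fixes c :: real
  assumes "c > 0"
  shows "integrable lborel (\<lambda>y::real. exp (- c * y\<^sup>2))"
proof -
  define s where "s = sqrt (1 / (2 * c))"
  have "s > 0" "2 * s\<^sup>2 = 1 / c" using assms by (simp_all add: s_def)
  then have "exp (- c * y\<^sup>2) = sqrt (2 * pi * s\<^sup>2) * normal_density 0 s y" for y
    using assms by (simp add: normal_density_def)
  then show ?thesis using \<open>s > 0\<close> by simp
qed

lemma integrable_exp_neg_norm_sq:
  fixes c :: real
  assumes "c > 0"
  shows "integrable lborel (\<lambda>x::'e::euclidean_space. exp (- c * (norm x)\<^sup>2))"
proof (rule integrableI_bounded)
  have eq: "ennreal (exp (- c * (norm x)\<^sup>2)) = (\<Prod>b\<in>Basis. ennreal (exp (- c * (x \<bullet> b)\<^sup>2)))"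
    for x :: 'e
  proof -
    have "(norm x)\<^sup>2 = (\<Sum>b\<in>Basis. (x \<bullet> b) * (x \<bullet> b))"
      unfolding power2_norm_eq_inner by (rule euclidean_inner)
    then have "exp (- c * (norm x)\<^sup>2) = (\<Prod>b\<in>Basis. exp (- c * (x \<bullet> b)\<^sup>2))"
      by (simp add: sum_distrib_left exp_sum power2_eq_square)
    then show ?thesis by (simp add: prod_ennreal)
  qed
  have "(\<integral>\<^sup>+x. ennreal (exp (- c * (norm (x::'e))\<^sup>2)) \<partial>lborel)
      = (\<Prod>b\<in>(Basis::'e set). \<integral>\<^sup>+y. ennreal (exp (- c * y\<^sup>2)) \<partial>lborel)"
    unfolding eq by (rule nn_integral_lborel_prod) auto
  also have "\<dots> < \<infinity>"
    using integrable_exp_neg_sq[OF assms] unfolding integrable_iff_bounded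
    by (simp add: power_less_top_ennreal)
  finally show "(\<integral>\<^sup>+x. ennreal (norm (exp (- c * (norm (x::'e))\<^sup>2))) \<partial>lborel) < \<infinity>" by simp
qed simp

lemma tendsto_at_infinityI_sequentially:
  fixes F :: "'v::real_normed_vector \<Rightarrow> 'c::topological_space"
  assumes "\<And>X. filterlim X at_infinity sequentially \<Longrightarrow> (\<lambda>n. F (X n)) \<longlonglongrightarrow> L"
  shows "(F \<longlongrightarrow> L) at_infinity"
proof (rule topological_tendstoI, rule ccontr)
  fix S assume S: "open S" "L \<in> S" and "\<not> eventually (\<lambda>x. F x \<in> S) at_infinity"
  then have "\<forall>n::nat. \<exists>x. real n \<le> norm x \<and> F x \<notin> S"
    unfolding eventually_at_infinity by (metis not_le)
  then obtain X where X: "\<And>n. real n \<le> norm (X n)" "\<And>n. F (X n) \<notin> S" by metis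
  have "filterlim (\<lambda>n. norm (X n)) at_top sequentially"
    by (rule filterlim_at_top_mono[OF filterlim_real_sequentially]) (use X in auto)
  then have "filterlim X at_infinity sequentially" by (rule filterlim_norm_at_top_imp_at_infinity)
  from assms[OF this] S have "eventually (\<lambda>n. F (X n) \<in> S) sequentially"
    by (auto simp: tendsto_def)
  then show False using X(2) by auto
qed

lemma nn_integral_abs_diff_tendsto_0_dominated:
  fixes f :: "'v::real_normed_vector \<Rightarrow> 'x \<Rightarrow> real"
  assumes [measurable]: "\<And>\<gamma>. f \<gamma> \<in> borel_measurable M" "g \<in> borel_measurable M"
    and lim: "\<And>x. ((\<lambda>\<gamma>. f \<gamma> x) \<longlongrightarrow> g x) at_infinity"
    and W: "integrable M W" and bound: "\<And>\<gamma> x. \<bar>f \<gamma> x\<bar> \<le> W x"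
  shows "((\<lambda>\<gamma>. \<integral>\<^sup>+ x. ennreal \<bar>f \<gamma> x - g x\<bar> \<partial>M) \<longlongrightarrow> 0) at_infinity"
proof (rule tendsto_at_infinityI_sequentially)
  fix X :: "nat \<Rightarrow> 'v" assume X: "filterlim X at_infinity sequentially"
  have "0 \<le> W x" for x using bound[of 0 x] by (meson abs_ge_zero order_trans)
  then have "(\<integral>\<^sup>+ x. ennreal (W x) \<partial>M) < \<infinity>" using W unfolding integrable_iff_bounded by simp
  moreover have "W \<in> borel_measurable M" using W by blast
  ultimately have "(\<lambda>n. \<integral>\<^sup>+ x. norm (g x - f (X n) x) \<partial>M) \<longlonglongrightarrow> 0"
    using bound filterlim_compose[OF lim X]
    by (intro nn_integral_dominated_convergence_norm[where w = W]) auto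
  then show "(\<lambda>n. \<integral>\<^sup>+ x. ennreal \<bar>f (X n) x - g x\<bar> \<partial>M) \<longlonglongrightarrow> 0"
    by (simp add: abs_minus_commute)
qed

lemma measure_density_integrable:
  fixes f :: "'x::euclidean_space \<Rightarrow> real"
  assumes "integrable lborel f" and [measurable]: "A \<in> sets borel"
  shows "measure (density lborel (\<lambda>x. ennreal (f x))) A = (\<integral>x. indicator A x * max 0 (f x) \<partial>lborel)"
proof -
  have [measurable]: "f \<in> borel_measurable borel" using assms(1) by auto
  have int: "integrable lborel (\<lambda>x. indicator A x * max 0 (f x))"
    by (rule Bochner_Integration.integrable_bound[OF integrable_norm[OF assms(1)]])
      (auto simp: indicator_def)
  have "emeasure (density lborel (\<lambda>x. ennreal (f x))) A = (\<integral>\<^sup>+x. ennreal (f x) * indicator A x \<partial>lborel)"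
    by (rule emeasure_density) auto
  also have "\<dots> = (\<integral>\<^sup>+x. ennreal (indicator A x * max 0 (f x)) \<partial>lborel)"
    by (intro nn_integral_cong) (auto simp: indicator_def max_def ennreal_neg)
  also have "\<dots> = ennreal (\<integral>x. indicator A x * max 0 (f x) \<partial>lborel)"
    by (rule nn_integral_eq_integral[OF int]) simp
  finally show ?thesis unfolding measure_def by (simp add: integral_nonneg)
qed

lemma tv_dist_density_le:
  fixes f g :: "'x::euclidean_space \<Rightarrow> real"
  assumes f: "integrable lborel f" and g: "integrable lborel g"
  shows "0 \<le> tv_dist (density lborel (\<lambda>x. ennreal (f x))) (density lborel (\<lambda>x. ennreal (g x)))"
    and "tv_dist (density lborel (\<lambda>x. ennreal (f x))) (density lborel (\<lambda>x. ennreal (g x)))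
        \<le> enn2real (\<integral>\<^sup>+x. ennreal \<bar>f x - g x\<bar> \<partial>lborel)"
proof -
  have fg: "integrable lborel (\<lambda>x. \<bar>f x - g x\<bar>)" using f g by auto
  have each: "\<bar>measure (density lborel (\<lambda>x. ennreal (f x))) A - measure (density lborel (\<lambda>x. ennreal (g x))) A\<bar>
      \<le> (\<integral>x. \<bar>f x - g x\<bar> \<partial>lborel)" if A: "A \<in> sets borel" for A
  proof -
    have int_f: "integrable lborel (\<lambda>x. indicator A x * max 0 (f x))"
      and int_g: "integrable lborel (\<lambda>x. indicator A x * max 0 (g x))"
      using integrable_mult_indicator[OF _ integrable_max[OF integrable_zero f], of A]
        integrable_mult_indicator[OF _ integrable_max[OF integrable_zero g], of A] A
      by simp_all
    have "measure (density lborel (\<lambda>x. ennreal (f x))) A - measure (density lborel (\<lambda>x. ennreal (g x))) A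
        = (\<integral>x. indicator A x * max 0 (f x) - indicator A x * max 0 (g x) \<partial>lborel)"
      using int_f int_g by (simp add: measure_density_integrable[OF f A] measure_density_integrable[OF g A])
    also have "\<bar>\<dots>\<bar> \<le> (\<integral>x. \<bar>f x - g x\<bar> \<partial>lborel)"
      by (rule integral_abs_bound_integral[OF Bochner_Integration.integrable_diff[OF int_f int_g] fg])
        (auto simp: indicator_def max_def)
    finally show ?thesis .
  qed
  have "enn2real (\<integral>\<^sup>+x. ennreal \<bar>f x - g x\<bar> \<partial>lborel) = (\<integral>x. \<bar>f x - g x\<bar> \<partial>lborel)"
    by (simp add: nn_integral_eq_integral[OF fg] integral_nonneg)
  moreover have "sets (borel :: 'x measure) \<noteq> {}" by auto
  ultimately show "tv_dist (density lborel (\<lambda>x. ennreal (f x))) (density lborel (\<lambda>x. ennreal (g x)))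
      \<le> enn2real (\<integral>\<^sup>+x. ennreal \<bar>f x - g x\<bar> \<partial>lborel)"
    unfolding tv_dist_def using each by (simp add: cSUP_least)
  show "0 \<le> tv_dist (density lborel (\<lambda>x. ennreal (f x))) (density lborel (\<lambda>x. ennreal (g x)))"
    unfolding tv_dist_def by (rule cSUP_upper2[where x="{}"]) (auto intro!: bdd_aboveI2 each)
qed

lemma tv_dist_density_tendsto_0:
  fixes f :: "'v \<Rightarrow> 'x::euclidean_space \<Rightarrow> real"
  assumes "\<And>\<gamma>. integrable lborel (f \<gamma>)" "integrable lborel g"
    and "((\<lambda>\<gamma>. \<integral>\<^sup>+ x. ennreal \<bar>f \<gamma> x - g x\<bar> \<partial>lborel) \<longlongrightarrow> 0) F"
  shows "((\<lambda>\<gamma>. tv_dist (density lborel (\<lambda>x. ennreal (f \<gamma> x))) (density lborel (\<lambda>x. ennreal (g x))))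
    \<longlongrightarrow> 0) F"
proof (rule tendsto_sandwich[OF always_eventually always_eventually tendsto_const])
  show "((\<lambda>\<gamma>. enn2real (\<integral>\<^sup>+ x. ennreal \<bar>f \<gamma> x - g x\<bar> \<partial>lborel)) \<longlongrightarrow> 0) F"
    using tendsto_enn2real[of _ 0] assms(3) by simp
qed (use tv_dist_density_le[OF assms(1,2)] in auto)

section \<open>Convergence of the densities\<close>

lemma norm_rescale_minus_le:
  fixes w :: "'v::real_normed_vector"
  shows "norm ((if w = 0 then 0 else (r / norm w) *\<^sub>R w) - w) \<le> \<bar>r - norm w\<bar>"
proof (cases "w = 0")
  case False
  then have "(r / norm w) *\<^sub>R w - w = ((r - norm w) / norm w) *\<^sub>R w"
    by (simp add: diff_divide_distrib scaleR_diff_left)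
  then show ?thesis using False by simp
qed simp

lemma sq_ge_half_sq_minus_sq:
  fixes d C z :: real
  assumes "0 \<le> d" "0 \<le> C" "0 \<le> z" "d - C \<le> z"
  shows "d\<^sup>2 / 2 - C\<^sup>2 \<le> z\<^sup>2"
proof (cases "d \<le> C")
  case True
  then have "d\<^sup>2 \<le> C\<^sup>2" using assms by (intro power_mono) auto
  then show ?thesis using zero_le_power2[of C] zero_le_power2[of z] by linarith
next
  case False
  then have "(d - C)\<^sup>2 \<le> z\<^sup>2" using assms by (intro power_mono) auto
  moreover have "d\<^sup>2 / 2 - C\<^sup>2 + (d - 2 * C)\<^sup>2 / 2 = (d - C)\<^sup>2"
    by (simp add: power2_eq_square field_simps)
  moreover have "0 \<le> (d - 2 * C)\<^sup>2 / 2" by simp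
  ultimately show ?thesis by linarith
qed

lemma borel_measurable_matrix_vector_mult [measurable]:
  "f \<in> borel_measurable N \<Longrightarrow> (\<lambda>x. (A::real^'n^'m) *v f x) \<in> borel_measurable N"
  by (rule borel_measurable_continuous_on[OF linear_continuous_on[OF matrix_vector_mul_bounded_linear]])

lemma borel_measurable_fst' [measurable]:
  "f \<in> borel_measurable N \<Longrightarrow> (\<lambda>x. fst (f x :: 'x::topological_space \<times> 'y::topological_space)) \<in> borel_measurable N"
  by (rule borel_measurable_continuous_on[OF continuous_on_fst[OF continuous_on_id]])

lemma borel_measurable_snd' [measurable]:
  "f \<in> borel_measurable N \<Longrightarrow> (\<lambda>x. snd (f x :: 'x::topological_space \<times> 'y::topological_space)) \<in> borel_measurable N"
  by (rule borel_measurable_continuous_on[OF continuous_on_snd[OF continuous_on_id]])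

context
  fixes \<sigma> \<alpha> :: real and Q :: "real^('a::finite+'b::finite)^('a+'b)"
  assumes sigma_pos: "\<sigma> > 0" and alpha_pos: "\<alpha> > 0" and Q_pd: "pos_def_mat Q"
begin

definition w_vec :: "real^'b \<Rightarrow> (real^'a) \<times> (real^'b) \<Rightarrow> real^'b" where
  "w_vec \<gamma> t = mat_sqrt (schur_complement Q) *v (snd t + \<gamma>)"

definition G_val :: "real^'b \<Rightarrow> (real^'a) \<times> (real^'b) \<Rightarrow> real" where
  "G_val \<gamma> t = gfun (exp (2 * \<alpha> * real CARD('b))) (\<sigma>\<^sup>2 / \<alpha>) (norm (w_vec \<gamma> t))"

definition z_vec :: "real^'b \<Rightarrow> (real^'a) \<times> (real^'b) \<Rightarrow> real^'b" where
  "z_vec \<gamma> t = (if w_vec \<gamma> t = 0 then 0 else (G_val \<gamma> t / norm (w_vec \<gamma> t)) *\<^sub>R w_vec \<gamma> t)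
     - mat_sqrt (schur_complement Q) *v \<gamma>"

definition u_vec :: "(real^'a) \<times> (real^'b) \<Rightarrow> real^'a" where
  "u_vec t = mat_sqrt (blk11 Q) *v fst t + mat_isqrt (blk11 Q) *v (blk12 Q *v snd t)"

definition norm_const :: real where
  "norm_const = (2 * pi * \<sigma>\<^sup>2) powr (- real (CARD('a) + CARD('b)) / 2) * sqrt (det Q)"

lemma f_inf_gamma_eq:
  "f_inf_gamma \<sigma> \<alpha> Q \<gamma> t = norm_const * correction \<sigma> \<alpha> CARD('b) (G_val \<gamma> t)
     * exp (- (norm (u_vec t))\<^sup>2 / (2 * \<sigma>\<^sup>2)) * exp (- (norm (z_vec \<gamma> t))\<^sup>2 / (2 * \<sigma>\<^sup>2))"
  unfolding f_inf_gamma_def Let_def norm_const_def correction_def u_vec_def z_vec_def G_val_def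
    w_vec_def schur_complement_def
  by (simp add: ac_simps)

lemma f_inf_inf_eq:
  "f_inf_inf \<sigma> Q t = norm_const
     * exp (- (norm (u_vec t))\<^sup>2 / (2 * \<sigma>\<^sup>2))
     * exp (- (norm (mat_sqrt (schur_complement Q) *v snd t))\<^sup>2 / (2 * \<sigma>\<^sup>2))"
proof -
  have "exp (- (norm (u_vec t))\<^sup>2 / (2 * \<sigma>\<^sup>2))
      * exp (- (norm (mat_sqrt (schur_complement Q) *v snd t))\<^sup>2 / (2 * \<sigma>\<^sup>2))
      = exp (- (joinv (fst t) (snd t) \<bullet> (Q *v joinv (fst t) (snd t))) / (2 * \<sigma>\<^sup>2))"
    unfolding u_vec_def quadratic_form_completing_square[OF Q_pd, symmetric] mult_exp_exp
    by (simp add: diff_divide_distrib)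
  then show ?thesis unfolding f_inf_inf_def Let_def norm_const_def by (simp add: mult.assoc)
qed

lemma G_val_minus_norm_w_vec:
  "0 \<le> G_val \<gamma> t - norm (w_vec \<gamma> t)"
  "G_val \<gamma> t - norm (w_vec \<gamma> t) \<le> exp (2 * \<alpha> * real CARD('b)) * (1 + \<sigma>\<^sup>2 / \<alpha>)"
  using gfun_ge_self[of _ "\<sigma>\<^sup>2 / \<alpha>" "norm (w_vec \<gamma> t)"]
    gfun_minus_bounded[of _ "\<sigma>\<^sup>2 / \<alpha>" "norm (w_vec \<gamma> t)"] sigma_pos alpha_pos
  by (simp_all add: G_val_def)

lemma norm_z_vec_minus_le:
  "norm (z_vec \<gamma> t - mat_sqrt (schur_complement Q) *v snd t) \<le> G_val \<gamma> t - norm (w_vec \<gamma> t)"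
proof -
  have "z_vec \<gamma> t - mat_sqrt (schur_complement Q) *v snd t
      = (if w_vec \<gamma> t = 0 then 0 else (G_val \<gamma> t / norm (w_vec \<gamma> t)) *\<^sub>R w_vec \<gamma> t) - w_vec \<gamma> t"
    by (simp add: z_vec_def w_vec_def matrix_vector_right_distrib)
  then show ?thesis
    using norm_rescale_minus_le[of "w_vec \<gamma> t" "G_val \<gamma> t"] G_val_minus_norm_w_vec(1)[of \<gamma> t] by simp
qed

lemma f_inf_gamma_tendsto: "((\<lambda>\<gamma>. f_inf_gamma \<sigma> \<alpha> Q \<gamma> t) \<longlongrightarrow> f_inf_inf \<sigma> Q t) at_infinity"
proof -
  have w: "filterlim (\<lambda>\<gamma>. norm (w_vec \<gamma> t)) at_top at_infinity"
    unfolding w_vec_def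
    by (rule filterlim_norm_pos_def_at_infinity[OF pos_def_mat_sqrt[OF pos_def_schur_complement[OF Q_pd]]])
  have a: "exp (2 * \<alpha> * real CARD('b)) > 0" and b: "\<sigma>\<^sup>2 / \<alpha> > 0" using sigma_pos alpha_pos by auto
  have G: "filterlim (\<lambda>\<gamma>. G_val \<gamma> t) at_top at_infinity"
    unfolding G_val_def by (rule filterlim_compose[OF filterlim_gfun_at_top[OF a b] w])
  have gap: "((\<lambda>\<gamma>. G_val \<gamma> t - norm (w_vec \<gamma> t)) \<longlongrightarrow> 0) at_infinity"
    unfolding G_val_def by (rule filterlim_compose[OF gfun_minus_tendsto_0[OF a b] w])
  have "((\<lambda>\<gamma>. z_vec \<gamma> t - mat_sqrt (schur_complement Q) *v snd t) \<longlongrightarrow> 0) at_infinity"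
    by (rule Lim_null_comparison[OF always_eventually gap]) (simp add: norm_z_vec_minus_le)
  then have "((\<lambda>\<gamma>. z_vec \<gamma> t) \<longlongrightarrow> mat_sqrt (schur_complement Q) *v snd t) at_infinity"
    by (rule LIM_zero_cancel)
  moreover have "((\<lambda>\<gamma>. correction \<sigma> \<alpha> CARD('b) (G_val \<gamma> t)) \<longlongrightarrow> 1) at_infinity"
    by (rule filterlim_compose[OF correction_tendsto_1[OF alpha_pos sigma_pos] G])
  ultimately show ?thesis
    unfolding f_inf_gamma_eq f_inf_inf_eq using sigma_pos by (auto intro!: tendsto_eq_intros)
qed

lemma exponent_lower_bound:
  obtains m C where "m > 0" "\<And>\<gamma> t. m * (norm t)\<^sup>2 - C \<le> (norm (u_vec t))\<^sup>2 + (norm (z_vec \<gamma> t))\<^sup>2"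
proof -
  obtain m where "m > 0" and m: "\<And>x. m * (norm x)\<^sup>2 \<le> x \<bullet> (Q *v x)"
    using pos_def_mat_quadratic_lower_bound[OF Q_pd] by blast
  define C where "C = exp (2 * \<alpha> * real CARD('b)) * (1 + \<sigma>\<^sup>2 / \<alpha>)"
  have "m / 2 * (norm t)\<^sup>2 - C\<^sup>2 \<le> (norm (u_vec t))\<^sup>2 + (norm (z_vec \<gamma> t))\<^sup>2" for \<gamma> t
  proof -
    define d where "d = norm (mat_sqrt (schur_complement Q) *v snd t)"
    have "d \<le> norm (z_vec \<gamma> t) + norm (z_vec \<gamma> t - mat_sqrt (schur_complement Q) *v snd t)"
      unfolding d_def by (metis norm_minus_commute norm_triangle_sub add.commute)
    then have "d - C \<le> norm (z_vec \<gamma> t)"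
      using norm_z_vec_minus_le[of \<gamma> t] G_val_minus_norm_w_vec(2)[of \<gamma> t] unfolding C_def by linarith
    then have "d\<^sup>2 / 2 - C\<^sup>2 \<le> (norm (z_vec \<gamma> t))\<^sup>2"
      using sigma_pos alpha_pos by (intro sq_ge_half_sq_minus_sq) (auto simp: d_def C_def)
    moreover have "m * (norm t)\<^sup>2 \<le> (norm (u_vec t))\<^sup>2 + d\<^sup>2"
      using m[of "joinv (fst t) (snd t)"]
      by (simp add: u_vec_def d_def quadratic_form_completing_square[OF Q_pd] norm_joinv)
    ultimately show ?thesis using zero_le_power2[of "norm (u_vec t)"] by linarith
  qed
  then show thesis using that[of "m / 2" "C\<^sup>2"] \<open>m > 0\<close> by simp
qed

lemma f_inf_gamma_gaussian_bound:
  obtains K c where "c > 0" "\<And>\<gamma> t. \<bar>f_inf_gamma \<sigma> \<alpha> Q \<gamma> t\<bar> \<le> K * exp (- c * (norm t)\<^sup>2)"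
proof -
  obtain m C where "m > 0" and mC: "\<And>\<gamma> t. m * (norm t)\<^sup>2 - C \<le> (norm (u_vec t))\<^sup>2 + (norm (z_vec \<gamma> t))\<^sup>2"
    using exponent_lower_bound by blast
  define M where "M = (1 + exp (2 * \<alpha> * real CARD('b))) ^ CARD('b)"
  have "\<bar>f_inf_gamma \<sigma> \<alpha> Q \<gamma> t\<bar>
      \<le> \<bar>norm_const\<bar> * M * exp (C / (2 * \<sigma>\<^sup>2)) * exp (- (m / (2 * \<sigma>\<^sup>2)) * (norm t)\<^sup>2)" for \<gamma> t
  proof -
    have "exp (- (norm (u_vec t))\<^sup>2 / (2 * \<sigma>\<^sup>2)) * exp (- (norm (z_vec \<gamma> t))\<^sup>2 / (2 * \<sigma>\<^sup>2))
        = exp (- ((norm (u_vec t))\<^sup>2 + (norm (z_vec \<gamma> t))\<^sup>2) / (2 * \<sigma>\<^sup>2))"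
      unfolding mult_exp_exp by (simp add: diff_divide_distrib)
    also have "\<dots> \<le> exp (- (m * (norm t)\<^sup>2 - C) / (2 * \<sigma>\<^sup>2))"
      using mC[of t \<gamma>] sigma_pos by (simp add: divide_right_mono)
    also have "\<dots> = exp (C / (2 * \<sigma>\<^sup>2)) * exp (- (m / (2 * \<sigma>\<^sup>2)) * (norm t)\<^sup>2)"
      by (simp add: diff_divide_distrib exp_add[symmetric])
    finally show ?thesis
      unfolding f_inf_gamma_eq M_def
      using correction_bounds[OF alpha_pos, of \<sigma> "CARD('b)" "G_val \<gamma> t"]
      by (simp add: abs_mult mult.assoc mult_left_mono mult_mono)
  qed
  then show thesis
    using that[of "m / (2 * \<sigma>\<^sup>2)" "\<bar>norm_const\<bar> * M * exp (C / (2 * \<sigma>\<^sup>2))"] \<open>m > 0\<close> sigma_pos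
    by simp
qed

lemma borel_measurable_f_inf_gamma: "f_inf_gamma \<sigma> \<alpha> Q \<gamma> \<in> borel_measurable borel"
proof -
  have [measurable]: "(\<lambda>y. gfun (exp (2 * \<alpha> * real CARD('b))) (\<sigma>\<^sup>2 / \<alpha>) (max 0 y)) \<in> borel_measurable borel"
    using sigma_pos alpha_pos by (intro gfun_mono_borel_measurable) auto
  have "G_val \<gamma> = (\<lambda>t. gfun (exp (2 * \<alpha> * real CARD('b))) (\<sigma>\<^sup>2 / \<alpha>) (max 0 (norm (w_vec \<gamma> t))))"
    by (simp add: G_val_def fun_eq_iff)
  then have [measurable]: "G_val \<gamma> \<in> borel_measurable borel"
    unfolding w_vec_def by (simp only:) measurable
  show ?thesis
    unfolding f_inf_gamma_eq[abs_def] correction_def z_vec_def u_vec_def w_vec_def by measurable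
qed

lemma borel_measurable_f_inf_inf: "f_inf_inf \<sigma> Q \<in> borel_measurable borel"
  unfolding f_inf_inf_eq[abs_def] u_vec_def by measurable

end

theorem mainTheorem7:
  fixes \<sigma> \<alpha> :: real and Q :: "real^('a::finite + 'b::finite)^('a + 'b)"
  assumes "\<sigma> > 0" and "\<alpha> > 0" and "pos_def_mat Q"
  shows "(\<forall>t :: (real^'a) \<times> (real^'b).
            ((\<lambda>\<gamma>. f_inf_gamma \<sigma> \<alpha> Q \<gamma> t) \<longlongrightarrow> f_inf_inf \<sigma> Q t) at_infinity)
       \<and> ((\<lambda>\<gamma>. \<integral>\<^sup>+ t. ennreal \<bar>f_inf_gamma \<sigma> \<alpha> Q \<gamma> t - f_inf_inf \<sigma> Q t\<bar> \<partial>lborel)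
            \<longlongrightarrow> 0) at_infinity
       \<and> ((\<lambda>\<gamma>. tv_dist (density lborel (\<lambda>t. ennreal (f_inf_gamma \<sigma> \<alpha> Q \<gamma> t)))
                          (density lborel (\<lambda>t. ennreal (f_inf_inf \<sigma> Q t))))
            \<longlongrightarrow> 0) at_infinity"
proof -
  note lim = f_inf_gamma_tendsto[OF assms]
  obtain K c where "c > 0" and bound: "\<And>\<gamma> t. \<bar>f_inf_gamma \<sigma> \<alpha> Q \<gamma> t\<bar> \<le> K * exp (- c * (norm t)\<^sup>2)"
    using f_inf_gamma_gaussian_bound[OF assms] by blast
  define W where "W t = K * exp (- c * (norm (t :: (real^'a) \<times> (real^'b)))\<^sup>2)" for t
  have W: "integrable lborel W"
    unfolding W_def by (intro integrable_mult_right integrable_exp_neg_norm_sq[OF \<open>c > 0\<close>])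
  have f_bound: "\<bar>f_inf_gamma \<sigma> \<alpha> Q \<gamma> t\<bar> \<le> W t" for \<gamma> t unfolding W_def by (rule bound)
  have inf_bound: "\<bar>f_inf_inf \<sigma> Q t\<bar> \<le> W t" for t
    by (rule tendsto_le[OF trivial_limit_at_infinity tendsto_const tendsto_rabs[OF lim]])
      (simp add: f_bound)
  note [measurable] = borel_measurable_f_inf_gamma[OF assms] borel_measurable_f_inf_inf[OF assms]
  have L1: "((\<lambda>\<gamma>. \<integral>\<^sup>+ t. ennreal \<bar>f_inf_gamma \<sigma> \<alpha> Q \<gamma> t - f_inf_inf \<sigma> Q t\<bar> \<partial>lborel) \<longlongrightarrow> 0) at_infinity"
    by (rule nn_integral_abs_diff_tendsto_0_dominated[OF _ _ lim W f_bound]) simp_all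
  have "integrable lborel (f_inf_gamma \<sigma> \<alpha> Q \<gamma>)" "integrable lborel (f_inf_inf \<sigma> Q)" for \<gamma>
    by (auto intro!: Bochner_Integration.integrable_bound[OF W] AE_I2
        order_trans[OF f_bound abs_ge_self] order_trans[OF inf_bound abs_ge_self])
  then show ?thesis using lim L1 tv_dist_density_tendsto_0[OF _ _ L1] by blast
qed

end
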